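(* Let $m,n,N$ be positive integers and for each $1\le i\le 2m$ let $\mathbf{x}^{(i)}=(\mathbf{x}^{(i)}_1,\dots,\mathbf{x}^{(i)}_n)$ be a sequence of $n$ variables. Then $$\sum_{\substack{\lambda:\ \ell(\lambda)\le n\\ \lambda_1\le N}}s_\lambda(\mathbf{x}^{(1)})s_\lambda(\mathbf{x}^{(2)})\cdots s_\lambda(\mathbf{x}^{(2m)})=\prod_{i=1}^{2m}\frac{1}{V(\mathbf{x}^{(i)})}\cdot\mathrm{Det}^{[2m]}\left(\frac{1-(\mathbf{x}^{(1)}_{i_1}\cdots\mathbf{x}^{(2m)}_{i_{2m}})^{n+N}}{1-\mathbf{x}^{(1)}_{i_1}\cdots\mathbf{x}^{(2m)}_{i_{2m}}}\right)_{1\le i_1,\dots,i_{2m}\le n},$$ the sum being over all partitions $\lambda$ with at most $n$ parts and largest part at most $N$.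
   Context: $V(\mathbf{x})=\prod_{1\le i<j\le n}(\mathbf{x}_i-\mathbf{x}_j)$ is the Vandermonde product; $s_\lambda(\mathbf{x})=\det(\mathbf{x}_i^{\lambda_j+n-j})_{1\le i,j\le n}/V(\mathbf{x})$ is the Schur polynomial in $n$ variables. Each entry $\frac{1-y^{n+N}}{1-y}$ means the polynomial $\sum_{k=0}^{n+N-1}y^k$. Hyperdeterminant: $\mathrm{Det}^{[2m]}(A):=\frac{1}{n!}\sum_{\sigma_1,\dots,\sigma_{2m}\in\mathfrak{S}_n}\mathrm{sgn}(\sigma_1)\cdots\mathrm{sgn}(\sigma_{2m})\prod_{i=1}^nA(\sigma_1(i),\dots,\sigma_{2m}(i))$. *)

theory Defs
  imports "HOL-Combinatorics.Permutations"
begin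

text \<open>Variables are indexed from 0: a sequence of n variables is a function
  x :: nat => 'a, of which x 0, ..., x (n-1) are used.\<close>

definition vandermonde :: "nat \<Rightarrow> (nat \<Rightarrow> 'a::comm_ring_1) \<Rightarrow> 'a" where
  "vandermonde n x = (\<Prod>i<n. \<Prod>j\<in>{i<..<n}. (x i - x j))"

definition ldet :: "nat \<Rightarrow> (nat \<Rightarrow> nat \<Rightarrow> 'a::comm_ring_1) \<Rightarrow> 'a" where
  "ldet n A = (\<Sum>p\<in>{p. p permutes {..<n}}. of_int (sign p) * (\<Prod>i<n. A i (p i)))"

definition bounded_partitions :: "nat \<Rightarrow> nat \<Rightarrow> (nat \<Rightarrow> nat) set" where
  "bounded_partitions n N = {lam. (\<forall>i j. i \<le> j \<longrightarrow> j < n \<longrightarrow> lam j \<le> lam i)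
      \<and> (\<forall>i<n. lam i \<le> N) \<and> (\<forall>i\<ge>n. lam i = 0)}"

definition schur :: "nat \<Rightarrow> (nat \<Rightarrow> nat) \<Rightarrow> (nat \<Rightarrow> 'a::field) \<Rightarrow> 'a" where
  "schur n lam x = ldet n (\<lambda>i j. x i ^ (lam j + n - 1 - j)) / vandermonde n x"

text \<open>Hyperdeterminant of order k (k = 2m) of an n x ... x n array A, whose argument
  is an index tuple t (only t 0, ..., t (k-1) matter):
  Det^[k](A) = 1/n! * sum over sigma_1..sigma_k of prod sgn * prod_i A(sigma_1 i,...,sigma_k i).\<close>
definition hyperdet :: "nat \<Rightarrow> nat \<Rightarrow> ((nat \<Rightarrow> nat) \<Rightarrow> 'a::field_char_0) \<Rightarrow> 'a" where
  "hyperdet k n A = (1 / of_nat (fact n)) *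
     (\<Sum>\<sigma>\<in>(PiE {..<k} (\<lambda>_. {p. p permutes {..<n}})).
        (\<Prod>l<k. of_int (sign (\<sigma> l))) *
        (\<Prod>i<n. A (\<lambda>l. if l < k then \<sigma> l i else 0)))"

end

theory Submission
  imports Defs "Jordan_Normal_Form.Determinant"
begin

text \<open>Expanding every entry of the hyperdeterminant as a geometric series and multiplying out,
  Det^[2m] becomes 1/n! times the sum, over all exponent vectors f in {0..n+N-1}^n, of the
  product of the 2m generalized alternants det(x^(l)_i ^ f_j). Each alternant is alternating
  in f, so only injective f contribute, and since there is an even number of alternants their
  product is invariant under permuting f. Every injective f is uniquely (\<lambda> + \<delta>) \<circ> t for a
  permutation t and a partition \<lambda> in the n \<times> N box, so the sum is n! times
  \<Sum>_\<lambda> \<Prod>_l det(x^(l)_i ^ (\<lambda> + \<delta>)_j), and dividing by the Vandermonde products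
  yields the Schur functions.\<close>

lemma ldet_cong:
  assumes "\<And>i j. i < n \<Longrightarrow> j < n \<Longrightarrow> A i j = B i j"
  shows "ldet n A = ldet n B"
proof -
  have "(\<Prod>i<n. A i (p i)) = (\<Prod>i<n. B i (p i))" if "p permutes {..<n}" for p
    using that permutes_in_image[of p "{..<n}"] by (intro prod.cong) (auto simp: assms)
  then show ?thesis
    unfolding ldet_def by (intro sum.cong) auto
qed

lemma ldet_eq_det: "ldet n A = det (mat n n (\<lambda>(i, j). A i j))"
proof -
  have "ldet n A = ldet n (\<lambda>i j. mat n n (\<lambda>(i, j). A i j) $$ (i, j))"
    by (rule ldet_cong) simp
  then show ?thesis
    by (simp add: ldet_def det_def'[OF mat_carrier] atLeast0LessThan)
qed

lemma ldet_transpose: "ldet n (\<lambda>i j. A j i) = ldet n A"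
proof -
  have "mat n n (\<lambda>(i, j). A j i) = transpose_mat (mat n n (\<lambda>(i, j). A i j))"
    by (rule eq_matI) auto
  then show ?thesis
    by (metis ldet_eq_det det_transpose mat_carrier)
qed

lemma ldet_permute_columns:
  assumes "t permutes {..<n}"
  shows "ldet n (\<lambda>i j. A i (t j)) = of_int (sign t) * ldet n A"
proof -
  let ?M = "mat n n (\<lambda>(i, j). A j i)"
  have "mat n n (\<lambda>(i, j). A j (t i)) = mat n n (\<lambda>(i, j). ?M $$ (t i, j))"
    using assms permutes_in_image[of t "{..<n}"] by (intro cong_mat) auto
  moreover have "t permutes {0..<n}"
    using assms by (simp add: atLeast0LessThan)
  ultimately have "ldet n (\<lambda>i j. A j (t i)) = of_int (sign t) * ldet n (\<lambda>i j. A j i)"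
    unfolding ldet_eq_det by (metis (no_types) det_permute_rows mat_carrier)
  then show ?thesis
    using ldet_transpose[of n "\<lambda>i j. A j (t i)"] ldet_transpose[of n A] by simp
qed

lemma ldet_identical_columns:
  assumes "i < n" "j < n" "i \<noteq> j" "\<And>k. k < n \<Longrightarrow> A k i = A k j"
  shows "ldet n A = 0"
  unfolding ldet_eq_det
  by (rule det_identical_columns[of _ n i j]) (auto intro!: eq_vecI simp: assms)

definition alternant :: "nat \<Rightarrow> (nat \<Rightarrow> 'a::comm_ring_1) \<Rightarrow> (nat \<Rightarrow> nat) \<Rightarrow> 'a" where
  "alternant n y f = ldet n (\<lambda>i j. y i ^ f j)"

lemma alternant_cong: "(\<And>j. j < n \<Longrightarrow> f j = g j) \<Longrightarrow> alternant n y f = alternant n y g"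
  unfolding alternant_def by (rule ldet_cong) simp

lemma alternant_permute:
  "t permutes {..<n} \<Longrightarrow> alternant n y (f \<circ> t) = of_int (sign t) * alternant n y f"
  unfolding alternant_def using ldet_permute_columns[of t n "\<lambda>i j. y i ^ f j"] by simp

lemma alternant_eq_0_if_not_inj_on:
  assumes "\<not> inj_on f {..<n}"
  shows "alternant n y f = 0"
proof -
  obtain i j where "i < n" "j < n" "i \<noteq> j" "f i = f j"
    using assms by (auto simp: inj_on_def)
  then show ?thesis
    unfolding alternant_def by (intro ldet_identical_columns[of i n j]) auto
qed

lemma alternant_column_expansion:
  "alternant n y f = (\<Sum>p | p permutes {..<n}. of_int (sign p) * (\<Prod>j<n. y (p j) ^ f j))"
proof -
  have "ldet n (\<lambda>i j. y i ^ f j) = ldet n (\<lambda>i j. y j ^ f i)"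
    using ldet_transpose[of n "\<lambda>i j. y j ^ f i"] by simp
  then show ?thesis
    by (simp add: alternant_def ldet_def)
qed

lemma prod_alternants_permute_even:
  fixes m :: nat
  assumes "t permutes {..<n}"
  shows "(\<Prod>l<2*m. alternant n (x l) (f \<circ> t)) = (\<Prod>l<2*m. alternant n (x l) f)"
proof -
  have "(of_int (sign t) :: 'a) ^ (2*m) = 1"
    by (simp add: power_mult sign_def)
  then show ?thesis
    by (simp add: alternant_permute[OF assms] prod.distrib)
qed

lemma hyperdet_geometric_sums:
  fixes x :: "nat \<Rightarrow> nat \<Rightarrow> 'a::field_char_0"
  shows "hyperdet k n (\<lambda>t. \<Sum>r<M. (\<Prod>l<k. x l (t l)) ^ r)
    = 1 / of_nat (fact n) * (\<Sum>f\<in>{..<n} \<rightarrow>\<^sub>E {..<M}. \<Prod>l<k. alternant n (x l) f)"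
proof -
  let ?P = "{p. p permutes {..<n}}"
  let ?F = "{..<n} \<rightarrow>\<^sub>E {..<M}"
  let ?term = "\<lambda>\<sigma> f. \<Prod>l<k. of_int (sign (\<sigma> l)) * (\<Prod>i<n. x l (\<sigma> l i) ^ f i)"
  have expand: "(\<Prod>l<k. of_int (sign (\<sigma> l))) *
        (\<Prod>i<n. \<Sum>r<M. (\<Prod>l<k. x l (if l < k then \<sigma> l i else 0)) ^ r)
      = (\<Sum>f\<in>?F. ?term \<sigma> f)" for \<sigma>
  proof -
    have "(\<Prod>i<n. \<Sum>r<M. (\<Prod>l<k. x l (if l < k then \<sigma> l i else 0)) ^ r)
        = (\<Prod>i<n. \<Sum>r<M. (\<Prod>l<k. x l (\<sigma> l i)) ^ r)"
      by (intro prod.cong sum.cong refl) auto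
    also have "\<dots> = (\<Sum>f\<in>?F. \<Prod>i<n. (\<Prod>l<k. x l (\<sigma> l i)) ^ f i)"
      by (rule prod_sum_PiE) auto
    also have "\<dots> = (\<Sum>f\<in>?F. \<Prod>l<k. \<Prod>i<n. x l (\<sigma> l i) ^ f i)"
      by (simp add: prod_power_distrib prod.swap[of _ "{..<n}"])
    finally show ?thesis
      by (simp add: sum_distrib_left prod.distrib)
  qed
  have factorize: "(\<Sum>\<sigma>\<in>{..<k} \<rightarrow>\<^sub>E ?P. ?term \<sigma> f) = (\<Prod>l<k. alternant n (x l) f)" for f
    unfolding alternant_column_expansion
    by (rule prod_sum_PiE[symmetric]) (auto simp: finite_permutations)
  have "hyperdet k n (\<lambda>t. \<Sum>r<M. (\<Prod>l<k. x l (t l)) ^ r)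
      = 1 / of_nat (fact n) * (\<Sum>\<sigma>\<in>{..<k} \<rightarrow>\<^sub>E ?P. \<Sum>f\<in>?F. ?term \<sigma> f)"
    unfolding hyperdet_def by (simp only: expand)
  also have "\<dots> = 1 / of_nat (fact n) * (\<Sum>f\<in>?F. \<Sum>\<sigma>\<in>{..<k} \<rightarrow>\<^sub>E ?P. ?term \<sigma> f)"
    by (subst sum.swap) (rule refl)
  finally show ?thesis
    by (simp only: factorize)
qed

lemma strict_increasing_gap:
  fixes f :: "nat \<Rightarrow> nat"
  assumes "\<And>i j. i < j \<Longrightarrow> j < n \<Longrightarrow> f i < f j" and "a \<le> b" and "b < n"
  shows "f a + (b - a) \<le> f b"
  using assms(2,3)
proof (induction b rule: dec_induct)
  case base
  then show ?case by simp
next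
  case (step b)
  then show ?case
    using assms(1)[of b "Suc b"] by (simp add: Suc_diff_le)
qed

lemma strict_decreasing_eq_if_image_eq:
  fixes d e :: "nat \<Rightarrow> 'a::linorder"
  assumes "\<And>i j. i < j \<Longrightarrow> j < n \<Longrightarrow> d j < d i"
    and "\<And>i j. i < j \<Longrightarrow> j < n \<Longrightarrow> e j < e i"
    and "d ` {..<n} = e ` {..<n}" and "j < n"
  shows "d j = e j"
proof -
  have sorted: "sorted_wrt (<) (map h (rev [0..<n]))"
    if "\<And>i j. i < j \<Longrightarrow> j < n \<Longrightarrow> h j < h i" for h :: "nat \<Rightarrow> 'a"
    using that by (auto simp: sorted_wrt_iff_nth_less rev_nth)
  have "map d (rev [0..<n]) = map e (rev [0..<n])"
    by (rule strict_sorted_equal[OF sorted sorted])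
       (use assms in \<open>auto simp: lessThan_atLeast0\<close>)
  then show ?thesis
    using assms(4) by (simp add: map_eq_conv)
qed

definition plus_delta :: "nat \<Rightarrow> (nat \<Rightarrow> nat) \<Rightarrow> nat \<Rightarrow> nat" where
  "plus_delta n lam j = lam j + n - 1 - j"

lemma schur_eq_alternant:
  "schur n lam y = alternant n y (plus_delta n lam) / vandermonde n y"
  by (simp add: schur_def alternant_def plus_delta_def)

lemma plus_delta_strict_decreasing:
  assumes "lam \<in> bounded_partitions n N" and "i < j" and "j < n"
  shows "plus_delta n lam j < plus_delta n lam i"
proof -
  have "lam j \<le> lam i"
    using assms by (simp add: bounded_partitions_def)
  then show ?thesis
    using assms(2,3) by (simp add: plus_delta_def)
qed

lemma plus_delta_less:
  assumes "lam \<in> bounded_partitions n N" and "j < n"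
  shows "plus_delta n lam j < n + N"
  using assms by (auto simp: bounded_partitions_def plus_delta_def)

lemma inj_on_plus_delta:
  assumes "lam \<in> bounded_partitions n N"
  shows "inj_on (plus_delta n lam) {..<n}"
  by (rule inj_onI, rule ccontr)
     (auto dest: plus_delta_strict_decreasing[OF assms] simp: neq_iff)

lemma plus_delta_image_inj:
  assumes "lam \<in> bounded_partitions n N" and "lam' \<in> bounded_partitions n N"
    and "plus_delta n lam ` {..<n} = plus_delta n lam' ` {..<n}"
  shows "lam = lam'"
proof
  fix j
  show "lam j = lam' j"
  proof (cases "j < n")
    case True
    have "plus_delta n lam j = plus_delta n lam' j"
      by (rule strict_decreasing_eq_if_image_eq[OF _ _ assms(3) True])
         (use plus_delta_strict_decreasing assms(1,2) in blast)+
    then show ?thesis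
      using True by (simp add: plus_delta_def)
  next
    case False
    then show ?thesis
      using assms(1,2) by (simp add: bounded_partitions_def)
  qed
qed

lemma plus_delta_image_surj:
  assumes "S \<subseteq> {..<n + N}" and "card S = n"
  obtains lam where "lam \<in> bounded_partitions n N" and "plus_delta n lam ` {..<n} = S"
proof -
  define L where "L = sorted_list_of_set S"
  have "finite S"
    using assms(1) finite_subset by blast
  then have sorted: "sorted_wrt (<) L" and set_L: "set L = S" and length_L: "length L = n"
    using assms(2) by (auto simp: L_def)
  have gap: "L ! a + (b - a) \<le> L ! b" if "a \<le> b" "b < n" for a b
    using strict_increasing_gap[of n "(!) L"] sorted_wrt_nth_less[OF sorted] length_L that
    by auto
  have index_le: "a \<le> L ! a" if "a < n" for a
    using sorted_wrt_less_idx[OF sorted] length_L that by simp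
  define lam where "lam j = (if j < n then L ! (n - 1 - j) - (n - 1 - j) else 0)" for j
  have lam: "lam \<in> bounded_partitions n N"
    unfolding bounded_partitions_def
  proof (intro CollectI conjI allI impI)
    fix i j
    assume "i \<le> j" "j < n"
    then have "L ! (n - 1 - j) + ((n - 1 - i) - (n - 1 - j)) \<le> L ! (n - 1 - i)"
      by (intro gap) auto
    then show "lam j \<le> lam i"
      using index_le[of "n - 1 - j"] \<open>i \<le> j\<close> \<open>j < n\<close> by (simp add: lam_def)
  next
    fix i
    assume "i < n"
    then have "L ! (n - 1 - i) + i \<le> L ! (n - 1)" and "L ! (n - 1) \<in> S"
      using gap[of "n - 1 - i" "n - 1"] nth_mem[of "n - 1" L] length_L set_L by auto
    then show "lam i \<le> N"
      using assms(1) \<open>i < n\<close> by (auto simp: lam_def)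
  qed (simp add: lam_def)
  have "plus_delta n lam j = L ! (n - 1 - j)" if "j < n" for j
    using index_le[of "n - 1 - j"] that by (simp add: plus_delta_def lam_def)
  then have "plus_delta n lam ` {..<n} = (\<lambda>j. L ! (n - 1 - j)) ` {..<n}"
    by (intro image_cong) auto
  also have "\<dots> = (!) (rev L) ` {..<n}"
    by (intro image_cong) (auto simp: rev_nth length_L)
  also have "\<dots> = set (rev L)"
    by (auto simp: set_conv_nth length_L)
  finally show ?thesis
    using that lam set_L by simp
qed

definition permuted_plus_delta :: "nat \<Rightarrow> (nat \<Rightarrow> nat) \<times> (nat \<Rightarrow> nat) \<Rightarrow> nat \<Rightarrow> nat" where
  "permuted_plus_delta n = (\<lambda>(lam, t). restrict (plus_delta n lam \<circ> t) {..<n})"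

lemma inj_on_permuted_plus_delta:
  "inj_on (permuted_plus_delta n) (bounded_partitions n N \<times> {t. t permutes {..<n}})"
proof (rule inj_onI, clarify)
  fix lam t lam' t'
  assume lam: "lam \<in> bounded_partitions n N" and t: "t permutes {..<n}"
    and lam': "lam' \<in> bounded_partitions n N" and t': "t' permutes {..<n}"
    and eq: "permuted_plus_delta n (lam, t) = permuted_plus_delta n (lam', t')"
  have eq_at: "plus_delta n lam (t j) = plus_delta n lam' (t' j)" if "j < n" for j
    using fun_cong[OF eq, of j] that by (simp add: permuted_plus_delta_def)
  have "plus_delta n lam ` {..<n} = plus_delta n lam ` t ` {..<n}"
    by (simp add: permutes_image[OF t])
  also have "\<dots> = plus_delta n lam' ` t' ` {..<n}"
    using eq_at by (auto simp: image_iff)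
  also have "\<dots> = plus_delta n lam' ` {..<n}"
    by (simp add: permutes_image[OF t'])
  finally have "lam = lam'"
    by (rule plus_delta_image_inj[OF lam lam'])
  moreover have "t j = t' j" for j
  proof (cases "j < n")
    case True
    then have "t j < n" "t' j < n"
      using permutes_in_image[OF t] permutes_in_image[OF t'] by auto
    then show ?thesis
      using eq_at[OF True] inj_on_plus_delta[OF lam] \<open>lam = lam'\<close> by (auto dest: inj_onD)
  next
    case False
    then show ?thesis
      using permutes_not_in[OF t] permutes_not_in[OF t'] by auto
  qed
  ultimately show "lam = lam' \<and> t = t'"
    by auto
qed

lemma permuted_plus_delta_image:
  "permuted_plus_delta n ` (bounded_partitions n N \<times> {t. t permutes {..<n}})
     = {f \<in> {..<n} \<rightarrow>\<^sub>E {..<n + N}. inj_on f {..<n}}"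
proof (intro equalityI subsetI)
  fix f
  assume "f \<in> permuted_plus_delta n ` (bounded_partitions n N \<times> {t. t permutes {..<n}})"
  then obtain lam t where lam: "lam \<in> bounded_partitions n N" and t: "t permutes {..<n}"
    and f: "f = permuted_plus_delta n (lam, t)"
    by auto
  have "inj_on (plus_delta n lam \<circ> t) {..<n}"
    using inj_on_plus_delta[OF lam] permutes_inj_on[OF t] permutes_image[OF t]
    by (simp add: comp_inj_on)
  then show "f \<in> {f \<in> {..<n} \<rightarrow>\<^sub>E {..<n + N}. inj_on f {..<n}}"
    using plus_delta_less[OF lam] permutes_in_image[OF t]
    by (auto simp: f permuted_plus_delta_def inj_on_def)
next
  fix f
  assume "f \<in> {f \<in> {..<n} \<rightarrow>\<^sub>E {..<n + N}. inj_on f {..<n}}"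
  then have f: "f \<in> {..<n} \<rightarrow>\<^sub>E {..<n + N}" and inj: "inj_on f {..<n}"
    by auto
  have "f ` {..<n} \<subseteq> {..<n + N}" and "card (f ` {..<n}) = n"
    using f inj by (auto simp: card_image)
  then obtain lam where lam: "lam \<in> bounded_partitions n N"
    and image: "plus_delta n lam ` {..<n} = f ` {..<n}"
    by (rule plus_delta_image_surj)
  let ?d = "plus_delta n lam"
  define t where "t j = (if j < n then inv_into {..<n} ?d (f j) else j)" for j
  have "bij_betw ?d {..<n} (f ` {..<n})"
    using inj_on_plus_delta[OF lam] image by (simp add: bij_betw_def)
  then have "bij_betw (inv_into {..<n} ?d \<circ> f) {..<n} {..<n}"
    using inj by (intro bij_betw_trans[of f _ "f ` {..<n}"] bij_betw_inv_into) (auto simp: bij_betw_def)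
  then have "bij_betw t {..<n} {..<n}"
    by (rule bij_betw_cong[THEN iffD1, rotated]) (simp add: t_def)
  then have t: "t permutes {..<n}"
    by (rule bij_imp_permutes) (simp add: t_def)
  have "permuted_plus_delta n (lam, t) = f"
  proof
    fix j
    show "permuted_plus_delta n (lam, t) j = f j"
    proof (cases "j < n")
      case True
      then have "f j \<in> ?d ` {..<n}"
        using image by auto
      then show ?thesis
        using True by (simp add: permuted_plus_delta_def t_def f_inv_into_f)
    next
      case False
      then show ?thesis
        using PiE_arb[OF f] by (simp add: permuted_plus_delta_def)
    qed
  qed
  then show "f \<in> permuted_plus_delta n ` (bounded_partitions n N \<times> {t. t permutes {..<n}})"
    using lam t by force
qed

lemma sum_PiE_eq_fact_sum_bounded_partitions:
  fixes g :: "(nat \<Rightarrow> nat) \<Rightarrow> 'a::comm_ring_1"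
  assumes vanish: "\<And>f. \<not> inj_on f {..<n} \<Longrightarrow> g f = 0"
    and cong: "\<And>f f'. (\<And>j. j < n \<Longrightarrow> f j = f' j) \<Longrightarrow> g f = g f'"
    and invariant: "\<And>f t. t permutes {..<n} \<Longrightarrow> g (f \<circ> t) = g f"
  shows "(\<Sum>f\<in>{..<n} \<rightarrow>\<^sub>E {..<n + N}. g f)
    = of_nat (fact n) * (\<Sum>lam\<in>bounded_partitions n N. g (plus_delta n lam))"
proof -
  let ?P = "{t. t permutes {..<n}}"
  have bij: "bij_betw (permuted_plus_delta n) (bounded_partitions n N \<times> ?P)
      {f \<in> {..<n} \<rightarrow>\<^sub>E {..<n + N}. inj_on f {..<n}}"
    using inj_on_permuted_plus_delta permuted_plus_delta_image by (rule bij_betw_imageI)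
  have "(\<Sum>f\<in>{..<n} \<rightarrow>\<^sub>E {..<n + N}. g f) = (\<Sum>f\<in>{f \<in> {..<n} \<rightarrow>\<^sub>E {..<n + N}. inj_on f {..<n}}. g f)"
    by (rule sum.mono_neutral_right) (auto simp: finite_PiE vanish)
  also have "\<dots> = (\<Sum>z\<in>bounded_partitions n N \<times> ?P. g (permuted_plus_delta n z))"
    by (rule sum.reindex_bij_betw[OF bij, symmetric])
  also have "\<dots> = (\<Sum>(lam, t)\<in>bounded_partitions n N \<times> ?P. g (plus_delta n lam))"
  proof (rule sum.cong[OF refl], clarify)
    fix lam t
    assume "t permutes {..<n}"
    then show "g (permuted_plus_delta n (lam, t)) = g (plus_delta n lam)"
      using cong[of "permuted_plus_delta n (lam, t)" "plus_delta n lam \<circ> t"] invariant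
      by (simp add: permuted_plus_delta_def)
  qed
  also have "\<dots> = (\<Sum>lam\<in>bounded_partitions n N. of_nat (card ?P) * g (plus_delta n lam))"
    by (simp add: sum.cartesian_product[symmetric])
  finally show ?thesis
    by (simp add: card_permutations sum_distrib_left)
qed

theorem theorem3p1:
  fixes m n N :: nat and x :: "nat \<Rightarrow> nat \<Rightarrow> 'a::field_char_0"
  assumes "m > 0" and "n > 0" and "N > 0"
    and "\<forall>i<2*m. vandermonde n (x i) \<noteq> 0"
  shows "(\<Sum>lam\<in>bounded_partitions n N. \<Prod>i<2*m. schur n lam (x i))
       = (\<Prod>i<2*m. 1 / vandermonde n (x i)) *
         hyperdet (2*m) n (\<lambda>t. \<Sum>r<n+N. (\<Prod>k<2*m. x k (t k)) ^ r)"
proof -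
  let ?g = "\<lambda>f. \<Prod>l<2*m. alternant n (x l) f"
  have "(\<Sum>f\<in>{..<n} \<rightarrow>\<^sub>E {..<n + N}. ?g f)
      = of_nat (fact n) * (\<Sum>lam\<in>bounded_partitions n N. ?g (plus_delta n lam))"
  proof (rule sum_PiE_eq_fact_sum_bounded_partitions)
    show "?g f = 0" if "\<not> inj_on f {..<n}" for f
      using \<open>m > 0\<close> alternant_eq_0_if_not_inj_on[OF that]
      by (intro prod_zero bexI[of _ 0]) auto
    show "?g f = ?g f'" if "\<And>j. j < n \<Longrightarrow> f j = f' j" for f f'
      using alternant_cong that by (intro prod.cong) auto
    show "?g (f \<circ> t) = ?g f" if "t permutes {..<n}" for f t
      by (rule prod_alternants_permute_even[OF that])
  qed
  then have "(\<Sum>lam\<in>bounded_partitions n N. ?g (plus_delta n lam))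
      = hyperdet (2*m) n (\<lambda>t. \<Sum>r<n+N. (\<Prod>k<2*m. x k (t k)) ^ r)"
    by (simp add: hyperdet_geometric_sums)
  then show ?thesis
    by (simp add: schur_eq_alternant prod_dividef sum_divide_distrib[symmetric])
qed

end
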